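(* Let $\mathcal{C}$ be a prevariety over a finite alphabet $A$ and let $\alpha:A^*\to M$ be a morphism into a finite monoid. If $(s_1,t_1),(s_2,t_2)\in M^2$ are $\mathcal{C}$-pairs for $\alpha$, then $(s_1s_2,t_1t_2)$ is a $\mathcal{C}$-pair for $\alpha$.
   Context: Fix a finite alphabet $A$. A prevariety is a class of regular languages over $A$ containing $\emptyset$ and $A^*$, closed under union, intersection, complement, and under the quotients $u^{-1}L=\{w\mid uw\in L\}$ and $Lu^{-1}=\{w\mid wu\in L\}$. A language $L_1$ is $\mathcal{C}$-separable from $L_2$ if some $K\in\mathcal{C}$ satisfies $L_1\subseteq K$ and $K\cap L_2=\emptyset$. For a morphism $\alpha:A^*\to M$, a pair $(s,t)\in M^2$ is a $\mathcal{C}$-pair for $\alpha$ if $\alpha^{-1}(s)$ is not $\mathcal{C}$-separable from $\alpha^{-1}(t)$. *)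

theory Defs
  imports Main
begin

definition regular_lang :: "'a list set \<Rightarrow> bool" where
  "regular_lang L \<longleftrightarrow>
     (\<exists>(Q::nat set) q0 (\<delta>::nat \<Rightarrow> 'a \<Rightarrow> nat) F.
        finite Q \<and> q0 \<in> Q \<and> F \<subseteq> Q \<and> (\<forall>q\<in>Q. \<forall>a. \<delta> q a \<in> Q) \<and>
        L = {w. foldl \<delta> q0 w \<in> F})"

definition left_quot :: "'a list \<Rightarrow> 'a list set \<Rightarrow> 'a list set" where
  "left_quot u L = {w. u @ w \<in> L}"

definition right_quot :: "'a list set \<Rightarrow> 'a list \<Rightarrow> 'a list set" where
  "right_quot L u = {w. w @ u \<in> L}"

definition prevariety :: "'a list set set \<Rightarrow> bool" where
  "prevariety C \<longleftrightarrow>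
     (\<forall>L\<in>C. regular_lang L) \<and> {} \<in> C \<and> UNIV \<in> C \<and>
     (\<forall>K\<in>C. \<forall>L\<in>C. K \<union> L \<in> C) \<and>
     (\<forall>K\<in>C. \<forall>L\<in>C. K \<inter> L \<in> C) \<and>
     (\<forall>L\<in>C. - L \<in> C) \<and>
     (\<forall>L\<in>C. \<forall>u. left_quot u L \<in> C \<and> right_quot L u \<in> C)"

definition separable :: "'a list set set \<Rightarrow> 'a list set \<Rightarrow> 'a list set \<Rightarrow> bool" where
  "separable C L1 L2 \<longleftrightarrow> (\<exists>K\<in>C. L1 \<subseteq> K \<and> K \<inter> L2 = {})"

definition monoid_morphism :: "('a list \<Rightarrow> 'm::monoid_mult) \<Rightarrow> bool" where
  "monoid_morphism \<alpha> \<longleftrightarrow> \<alpha> [] = 1 \<and> (\<forall>u v. \<alpha> (u @ v) = \<alpha> u * \<alpha> v)"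

definition C_pair :: "'a list set set \<Rightarrow> ('a list \<Rightarrow> 'm::monoid_mult) \<Rightarrow> 'm \<Rightarrow> 'm \<Rightarrow> bool" where
  "C_pair C \<alpha> s t \<longleftrightarrow> \<not> separable C (\<alpha> -` {s}) (\<alpha> -` {t})"

end

theory Submission
  imports Defs
begin

text \<open>Suppose some \<open>K \<in> C\<close> separated \<open>\<alpha>\<inverse>(s\<^sub>1s\<^sub>2)\<close> from \<open>\<alpha>\<inverse>(t\<^sub>1t\<^sub>2)\<close>.
  The intersection \<open>H\<close> of the quotients \<open>u\<inverse>K\<close> over all \<open>u\<close> with \<open>\<alpha> u = s\<^sub>1\<close> is
  a finite intersection, because a regular language has only finitely many left quotients,
  so \<open>H \<in> C\<close>; it contains \<open>\<alpha>\<inverse>(s\<^sub>2)\<close>, hence meets \<open>\<alpha>\<inverse>(t\<^sub>2)\<close> in some \<open>w\<^sub>2\<close>.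
  Then \<open>K w\<^sub>2\<inverse> \<in> C\<close> contains \<open>\<alpha>\<inverse>(s\<^sub>1)\<close>, hence some \<open>w\<^sub>1\<close> with \<open>\<alpha> w\<^sub>1 = t\<^sub>1\<close>, and
  \<open>w\<^sub>1w\<^sub>2 \<in> K \<inter> \<alpha>\<inverse>(t\<^sub>1t\<^sub>2)\<close>.\<close>

lemma regular_lang_finite_left_quots:
  assumes "regular_lang K"
  shows "finite (range (\<lambda>u. left_quot u K))"
proof -
  obtain Q :: "nat set" and q0 \<delta> F where
    Q: "finite Q" "q0 \<in> Q" "\<forall>q\<in>Q. \<forall>a. \<delta> q a \<in> Q" and K: "K = {w. foldl \<delta> q0 w \<in> F}"
    using assms unfolding regular_lang_def by blast
  have foldl_in_Q: "foldl \<delta> q u \<in> Q" if "q \<in> Q" for q u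
    using that Q(3) by (induction u arbitrary: q) auto
  have "left_quot u K = {w. foldl \<delta> (foldl \<delta> q0 u) w \<in> F}" for u
    by (simp add: K left_quot_def)
  then have "range (\<lambda>u. left_quot u K) \<subseteq> (\<lambda>q. {w. foldl \<delta> q w \<in> F}) ` Q"
    using foldl_in_Q[OF Q(2)] by blast
  then show ?thesis
    using Q(1) finite_subset by blast
qed

lemma prevariety_Inter_closed:
  assumes "prevariety C" "finite F" "F \<subseteq> C"
  shows "\<Inter>F \<in> C"
  using assms(2,3)
proof (induction F rule: finite_induct)
  case empty
  then show ?case using assms(1) by (simp add: prevariety_def)
next
  case (insert L F)
  then show ?case using assms(1) unfolding prevariety_def by auto
qed

lemma prevariety_Inter_left_quots:
  assumes "prevariety C" "K \<in> C"
  shows "(\<Inter>u\<in>U. left_quot u K) \<in> C"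
proof (rule prevariety_Inter_closed[OF assms(1)])
  have "regular_lang K"
    using assms by (simp add: prevariety_def)
  then show "finite ((\<lambda>u. left_quot u K) ` U)"
    by (rule finite_subset[OF image_mono[OF subset_UNIV] regular_lang_finite_left_quots])
  show "(\<lambda>u. left_quot u K) ` U \<subseteq> C"
    using assms unfolding prevariety_def by blast
qed

lemma C_pair_meets:
  assumes "C_pair C \<alpha> s t" "K \<in> C" "\<alpha> -` {s} \<subseteq> K"
  obtains w where "w \<in> K" "\<alpha> w = t"
  using assms unfolding C_pair_def separable_def by blast

theorem lemma5p4:
  fixes C :: "('a::finite) list set set"
    and \<alpha> :: "'a list \<Rightarrow> 'm::{monoid_mult, finite}"
  assumes "prevariety C"
    and "monoid_morphism \<alpha>"
    and "C_pair C \<alpha> s1 t1"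
    and "C_pair C \<alpha> s2 t2"
  shows "C_pair C \<alpha> (s1 * s2) (t1 * t2)"
proof (rule ccontr)
  assume "\<not> C_pair C \<alpha> (s1 * s2) (t1 * t2)"
  then obtain K where K: "K \<in> C" "\<alpha> -` {s1 * s2} \<subseteq> K" "K \<inter> \<alpha> -` {t1 * t2} = {}"
    unfolding C_pair_def separable_def by blast
  have \<alpha>_append: "\<alpha> (u @ v) = \<alpha> u * \<alpha> v" for u v
    using assms(2) by (simp add: monoid_morphism_def)
  define H where "H = (\<Inter>u\<in>\<alpha> -` {s1}. left_quot u K)"
  have "H \<in> C" "\<alpha> -` {s2} \<subseteq> H"
    using prevariety_Inter_left_quots[OF assms(1) K(1)] K(2) \<alpha>_append
    by (auto simp: H_def left_quot_def)
  then obtain w2 where w2: "w2 \<in> H" "\<alpha> w2 = t2"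
    using C_pair_meets[OF assms(4)] by blast
  have "right_quot K w2 \<in> C" "\<alpha> -` {s1} \<subseteq> right_quot K w2"
    using assms(1) K(1) w2(1) by (auto simp: prevariety_def H_def left_quot_def right_quot_def)
  then obtain w1 where w1: "w1 \<in> right_quot K w2" "\<alpha> w1 = t1"
    using C_pair_meets[OF assms(3)] by blast
  have "w1 @ w2 \<in> K \<inter> \<alpha> -` {t1 * t2}"
    using w1 w2 \<alpha>_append by (simp add: right_quot_def)
  then show False
    using K(3) by blast
qed

end
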